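(* Let $t$ be an integer, $G$ a finite graph and $(T,Q,\alpha,\beta,R)$ an NLC-decomposition of $G$ with $|Q|\le t$. Let $y$ be a non-root node of $T$, let $p$ be its parent, and let $C=V(T_{y\mid p})\cap V(G)$ and $D=V(T_{p\mid y})\cap V(G)$. For every $q\in Q$ let $U_q=\{u\in C:\beta(\{y,u\})(\alpha(u))=q\}$. Then $(U_q)_{q\in Q}$ is a $D$-twin partition of $C$.
   Context: An NLC-decomposition of $G$ is a tuple $(T,Q,\alpha,\beta,R)$ where $T$ is a rooted binary tree (each node has at most one left child and at most one right child) whose leaf set is $V(G)$, $Q$ is a finite set of labels, $\alpha:V(G)\to Q$, $\beta$ assigns to each 2-element subset of $V(T)$ a function $Q\to Q$, and $R$ assigns to each node a subset of $Q\times Q$, such that: (nlc1) for distinct $u,v$ with $u$ an ancestor of $v$ and $u=u_0,u_1,\dots,u_n=v$ the $u$-$v$ path in $T$, $\beta(\{u_0,u_1\})\circ\cdots\circ\beta(\{u_{n-1},u_n\})=\beta(\{u,v\})$; (nlc2) for distinct $x,y\in V(G)$ with lowest common ancestor $u$, $x$ a descendant of the left child and $y$ of the right child of $u$: $xy\in E(G)$ iff $(\beta(\{u,x\})(\alpha(x)),\beta(\{u,y\})(\alpha(y)))\in R(u)$. Convention: $\beta(\{u,u\})$ is the identity map on $Q$. For an edge $ab$ of $T$, $T_{a\mid b}$ is the component of $a$ in $T-ab$. For a partition $\{C,D\}$ of $V(G)$, a $D$-twin partition of $C$ is a partition of $C$ (parts may be empty) such that any two vertices in a common part have the same neighbourhood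 in $D$. *)

theory Defs
  imports Main
begin

definition graph :: "'a set \<Rightarrow> ('a \<Rightarrow> 'a \<Rightarrow> bool) \<Rightarrow> bool" where
  "graph V E \<longleftrightarrow> finite V \<and> (\<forall>x y. E x y \<longrightarrow> x \<in> V \<and> y \<in> V \<and> x \<noteq> y \<and> E y x)"

definition child :: "('a \<Rightarrow> 'a option) \<Rightarrow> ('a \<Rightarrow> 'a option) \<Rightarrow> 'a \<Rightarrow> 'a \<Rightarrow> bool" where
  "child lc rc u v \<longleftrightarrow> lc u = Some v \<or> rc u = Some v"

definition ancestor :: "('a \<Rightarrow> 'a option) \<Rightarrow> ('a \<Rightarrow> 'a option) \<Rightarrow> 'a \<Rightarrow> 'a \<Rightarrow> bool" where
  "ancestor lc rc u v \<longleftrightarrow> (child lc rc)\<^sup>*\<^sup>* u v"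

definition rooted_binary_tree ::
  "'a set \<Rightarrow> 'a \<Rightarrow> ('a \<Rightarrow> 'a option) \<Rightarrow> ('a \<Rightarrow> 'a option) \<Rightarrow> bool" where
  "rooted_binary_tree N r lc rc \<longleftrightarrow>
     finite N \<and> r \<in> N \<and>
     (\<forall>u v. child lc rc u v \<longrightarrow> u \<in> N \<and> v \<in> N) \<and>
     (\<forall>u v. lc u = Some v \<longrightarrow> rc u \<noteq> Some v) \<and>
     (\<forall>u. \<not> child lc rc u r) \<and>
     (\<forall>u u' v. child lc rc u v \<and> child lc rc u' v \<longrightarrow> u = u') \<and>
     (\<forall>v \<in> N. ancestor lc rc r v)"

definition leaves :: "'a set \<Rightarrow> ('a \<Rightarrow> 'a option) \<Rightarrow> ('a \<Rightarrow> 'a option) \<Rightarrow> 'a set" where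
  "leaves N lc rc = {v \<in> N. lc v = None \<and> rc v = None}"

definition down_path :: "('a \<Rightarrow> 'a option) \<Rightarrow> ('a \<Rightarrow> 'a option) \<Rightarrow> 'a list \<Rightarrow> 'a \<Rightarrow> 'a \<Rightarrow> bool" where
  "down_path lc rc ps u v \<longleftrightarrow> ps \<noteq> [] \<and> hd ps = u \<and> last ps = v \<and>
     (\<forall>i. Suc i < length ps \<longrightarrow> child lc rc (ps ! i) (ps ! Suc i))"

definition betap :: "('a set \<Rightarrow> 'q \<Rightarrow> 'q) \<Rightarrow> 'a \<Rightarrow> 'a \<Rightarrow> 'q \<Rightarrow> 'q" where
  "betap \<beta> u v = (if u = v then id else \<beta> {u, v})"

definition nlc_decomposition ::
  "'a set \<Rightarrow> ('a \<Rightarrow> 'a \<Rightarrow> bool) \<Rightarrow> 'a set \<Rightarrow> 'a \<Rightarrow> ('a \<Rightarrow> 'a option) \<Rightarrow> ('a \<Rightarrow> 'a option)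
    \<Rightarrow> 'q set \<Rightarrow> ('a \<Rightarrow> 'q) \<Rightarrow> ('a set \<Rightarrow> 'q \<Rightarrow> 'q) \<Rightarrow> ('a \<Rightarrow> ('q \<times> 'q) set) \<Rightarrow> bool" where
  "nlc_decomposition V E N r lc rc Q \<alpha> \<beta> R \<longleftrightarrow>
     rooted_binary_tree N r lc rc \<and> leaves N lc rc = V \<and>
     finite Q \<and> \<alpha> ` V \<subseteq> Q \<and>
     (\<forall>u \<in> N. \<forall>v \<in> N. u \<noteq> v \<longrightarrow> \<beta> {u, v} ` Q \<subseteq> Q) \<and>
     (\<forall>u \<in> N. R u \<subseteq> Q \<times> Q) \<and>
     \<comment> \<open>(nlc1)\<close>
     (\<forall>u v ps. u \<noteq> v \<and> down_path lc rc ps u v \<longrightarrow>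
        (\<forall>q \<in> Q. foldr (\<circ>) (map (\<lambda>i. \<beta> {ps ! i, ps ! Suc i}) [0..<length ps - 1]) id q
                 = \<beta> {u, v} q)) \<and>
     \<comment> \<open>(nlc2)\<close>
     (\<forall>u a b x y. u \<in> N \<and> lc u = Some a \<and> rc u = Some b \<and> x \<in> V \<and> y \<in> V \<and>
        ancestor lc rc a x \<and> ancestor lc rc b y \<longrightarrow>
        (E x y \<longleftrightarrow> (betap \<beta> u x (\<alpha> x), betap \<beta> u y (\<alpha> y)) \<in> R u))"

text \<open>Node set of the component of a in T - ab (undirected tree edges).\<close>
definition tree_component ::
  "'a set \<Rightarrow> ('a \<Rightarrow> 'a option) \<Rightarrow> ('a \<Rightarrow> 'a option) \<Rightarrow> 'a \<Rightarrow> 'a \<Rightarrow> 'a set" where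
  "tree_component N lc rc a b =
     {v \<in> N. (\<lambda>x z. (child lc rc x z \<or> child lc rc z x) \<and> {x, z} \<noteq> {a, b})\<^sup>*\<^sup>* a v}"

text \<open>(U q) for q in Q is a D-twin partition of C (parts may be empty).\<close>
definition twin_partition ::
  "('a \<Rightarrow> 'a \<Rightarrow> bool) \<Rightarrow> 'a set \<Rightarrow> 'a set \<Rightarrow> 'q set \<Rightarrow> ('q \<Rightarrow> 'a set) \<Rightarrow> bool" where
  "twin_partition E D C Q U \<longleftrightarrow>
     (\<Union>q \<in> Q. U q) = C \<and>
     (\<forall>q \<in> Q. \<forall>q' \<in> Q. q \<noteq> q' \<longrightarrow> U q \<inter> U q' = {}) \<and>
     (\<forall>q \<in> Q. \<forall>x \<in> U q. \<forall>z \<in> U q. \<forall>d \<in> D. E x d \<longleftrightarrow> E z d)"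

end

theory Submission
  imports Defs
begin

text \<open>
  A vertex x of C and a vertex d of D branch apart at a proper ancestor w of y: x lies below
  the child of w on the side of y, d below the other child. By (nlc2) the adjacency of x and d
  is decided by the label \<open>\<beta>({w,x})(\<alpha>(x))\<close>, and by (nlc1) this label equals
  \<open>\<beta>({w,y})\<close> applied to \<open>\<beta>({y,x})(\<alpha>(x))\<close>, i.e. to the index of the part containing x.
  Hence vertices of C in the same part have the same neighbours in D.
\<close>

lemma rooted_binary_tree_child_in_nodes:
  assumes "rooted_binary_tree N r lc rc" "child lc rc u v"
  shows "u \<in> N" "v \<in> N"
  using assms unfolding rooted_binary_tree_def by blast+

lemma rooted_binary_tree_parent_unique:
  assumes "rooted_binary_tree N r lc rc" "child lc rc u v" "child lc rc u' v"
  shows "u = u'"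
  using assms unfolding rooted_binary_tree_def by blast

lemma rooted_binary_tree_acyclic:
  assumes T: "rooted_binary_tree N r lc rc"
  shows "\<not> (child lc rc)\<^sup>+\<^sup>+ v v"
proof
  assume cycle: "(child lc rc)\<^sup>+\<^sup>+ v v"
  have no_cycle_below_root: "\<not> (child lc rc)\<^sup>+\<^sup>+ w w" if "(child lc rc)\<^sup>*\<^sup>* r w" for w
    using that
  proof (induction rule: rtranclp_induct)
    case base
    show ?case
      using T unfolding rooted_binary_tree_def by (metis tranclp.cases)
  next
    case (step w w')
    show ?case
    proof
      assume "(child lc rc)\<^sup>+\<^sup>+ w' w'"
      then obtain w'' where "(child lc rc)\<^sup>*\<^sup>* w' w''" "child lc rc w'' w'"
        by (metis tranclp.cases tranclp_into_rtranclp rtranclp.rtrancl_refl)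
      moreover have "w'' = w"
        using rooted_binary_tree_parent_unique[OF T \<open>child lc rc w'' w'\<close> step(2)] .
      ultimately have "(child lc rc)\<^sup>+\<^sup>+ w w"
        using step(2) by (meson rtranclp_into_tranclp2)
      with step(3) show False ..
    qed
  qed
  from cycle obtain u where "child lc rc u v"
    by (metis tranclp.cases)
  then have "v \<in> N"
    using rooted_binary_tree_child_in_nodes[OF T] by blast
  then have "(child lc rc)\<^sup>*\<^sup>* r v"
    using T unfolding rooted_binary_tree_def ancestor_def by blast
  with cycle no_cycle_below_root show False by blast
qed

lemma ancestor_trans:
  "ancestor lc rc u v \<Longrightarrow> ancestor lc rc v w \<Longrightarrow> ancestor lc rc u w"
  unfolding ancestor_def by simp

lemma ancestor_if_child: "child lc rc u v \<Longrightarrow> ancestor lc rc u v"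
  unfolding ancestor_def by simp

lemma ancestor_last_step:
  assumes "ancestor lc rc a v" "a \<noteq> v"
  obtains w where "ancestor lc rc a w" "child lc rc w v"
  using assms unfolding ancestor_def by (metis rtranclp.cases)

lemma rooted_binary_tree_ancestor_antisym:
  assumes "rooted_binary_tree N r lc rc" "ancestor lc rc u v" "ancestor lc rc v u"
  shows "u = v"
proof (rule ccontr)
  assume "u \<noteq> v"
  with assms(2) obtain w where "ancestor lc rc u w" "child lc rc w v"
    by (rule ancestor_last_step)
  then have "(child lc rc)\<^sup>+\<^sup>+ v v"
    using assms(3) unfolding ancestor_def
    by (meson rtranclp_into_tranclp1 rtranclp_into_tranclp2 rtranclp_trans)
  with rooted_binary_tree_acyclic[OF assms(1)] show False by blast
qed

lemma rooted_binary_tree_proper_ancestor_in_nodes: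
  assumes "rooted_binary_tree N r lc rc" "ancestor lc rc u v" "u \<noteq> v"
  shows "v \<in> N"
  using assms by (metis ancestor_last_step rooted_binary_tree_child_in_nodes(2))

lemma tree_component_child_descendant:
  assumes T: "rooted_binary_tree N r lc rc" and py: "child lc rc p y"
    and "v \<in> tree_component N lc rc y p"
  shows "ancestor lc rc y v"
proof -
  have "(\<lambda>x z. (child lc rc x z \<or> child lc rc z x) \<and> {x, z} \<noteq> {y, p})\<^sup>*\<^sup>* y v"
    using assms(3) unfolding tree_component_def by blast
  then show ?thesis
  proof (induction rule: rtranclp_induct)
    case base
    show ?case unfolding ancestor_def by simp
  next
    case (step v w)
    from step(2) have "child lc rc v w \<or> child lc rc w v" and edge: "{v, w} \<noteq> {y, p}"
      by auto
    from this(1) show ?case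
    proof
      assume "child lc rc v w"
      with step(3) show ?thesis
        by (meson ancestor_if_child ancestor_trans)
    next
      assume wv: "child lc rc w v"
      have "y \<noteq> v"
        using rooted_binary_tree_parent_unique[OF T wv] py edge by auto
      with step(3) obtain w' where "ancestor lc rc y w'" "child lc rc w' v"
        by (rule ancestor_last_step)
      with rooted_binary_tree_parent_unique[OF T wv] show ?thesis
        by blast
    qed
  qed
qed

lemma tree_component_parent_not_descendant:
  assumes T: "rooted_binary_tree N r lc rc" and py: "child lc rc p y"
    and "v \<in> tree_component N lc rc p y"
  shows "\<not> ancestor lc rc y v"
proof -
  have "(\<lambda>x z. (child lc rc x z \<or> child lc rc z x) \<and> {x, z} \<noteq> {p, y})\<^sup>*\<^sup>* p v"
    using assms(3) unfolding tree_component_def by blast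
  then show ?thesis
  proof (induction rule: rtranclp_induct)
    case base
    show ?case
    proof
      assume "ancestor lc rc y p"
      with py have "(child lc rc)\<^sup>+\<^sup>+ y y"
        unfolding ancestor_def by (meson rtranclp_into_tranclp1)
      with rooted_binary_tree_acyclic[OF T] show False by blast
    qed
  next
    case (step v w)
    from step(2) have "child lc rc v w \<or> child lc rc w v" and edge: "{v, w} \<noteq> {p, y}"
      by auto
    from this(1) show ?case
    proof
      assume vw: "child lc rc v w"
      show ?thesis
      proof
        assume yw: "ancestor lc rc y w"
        have "y \<noteq> w"
          using rooted_binary_tree_parent_unique[OF T vw] py edge by auto
        with yw obtain w' where "ancestor lc rc y w'" "child lc rc w' w"
          by (rule ancestor_last_step)
        with rooted_binary_tree_parent_unique[OF T vw] step(3) show False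
          by blast
      qed
    next
      assume "child lc rc w v"
      with step(3) show ?thesis
        by (meson ancestor_if_child ancestor_trans)
    qed
  qed
qed

lemma branching_ancestor:
  assumes "ancestor lc rc u y" "ancestor lc rc u d" "\<not> ancestor lc rc y d"
    and leaf: "lc d = None" "rc d = None"
  obtains w a b where "ancestor lc rc a y" "ancestor lc rc b d"
    "(lc w = Some a \<and> rc w = Some b) \<or> (lc w = Some b \<and> rc w = Some a)"
  using assms(1,2) unfolding ancestor_def
proof (induction arbitrary: thesis rule: converse_rtranclp_induct)
  case base
  with assms(3) show ?case
    unfolding ancestor_def by blast
next
  case (step u u1)
  show ?case
  proof (cases "(child lc rc)\<^sup>*\<^sup>* u1 d")
    case True
    with step show ?thesis by blast
  next
    case False
    have "u \<noteq> d"
      using step(1) leaf unfolding child_def by auto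
    with step(5) obtain u2 where u2: "child lc rc u u2" "(child lc rc)\<^sup>*\<^sup>* u2 d"
      by (metis converse_rtranclpE)
    with False have "u1 \<noteq> u2" by blast
    with step(1) u2(1)
    have "(lc u = Some u1 \<and> rc u = Some u2) \<or> (lc u = Some u2 \<and> rc u = Some u1)"
      unfolding child_def by auto
    with step(2,4) u2(2) show ?thesis
      unfolding ancestor_def by blast
  qed
qed

lemma down_path_iff_successively:
  "down_path lc rc ps u v \<longleftrightarrow>
     ps \<noteq> [] \<and> hd ps = u \<and> last ps = v \<and> successively (child lc rc) ps"
  by (simp add: down_path_def successively_conv_nth)

lemma ancestor_obtains_down_path:
  assumes "ancestor lc rc u v"
  obtains ps where "down_path lc rc ps u v"
  using assms unfolding ancestor_def
proof (induction arbitrary: thesis rule: rtranclp_induct)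
  case base
  show ?case
    by (rule base[of "[u]"]) (simp add: down_path_iff_successively)
next
  case (step v w)
  obtain ps where "down_path lc rc ps u v"
    using step.IH .
  with step(2) have "down_path lc rc (ps @ [w]) u w"
    by (auto simp: down_path_iff_successively successively_append_iff)
  then show ?case by (rule step.prems)
qed

lemma down_path_append:
  assumes "down_path lc rc xs u v" "down_path lc rc (v # ys) v w"
  shows "down_path lc rc (xs @ ys) u w"
  using assms by (cases ys) (auto simp: down_path_iff_successively successively_append_iff)

fun beta_along :: "('a set \<Rightarrow> 'q \<Rightarrow> 'q) \<Rightarrow> 'a list \<Rightarrow> 'q \<Rightarrow> 'q" where
  "beta_along \<beta> (a # b # ps) = \<beta> {a, b} \<circ> beta_along \<beta> (b # ps)"
| "beta_along \<beta> _ = id"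

lemma foldr_comp_beta_pairs_eq_beta_along:
  "foldr (\<circ>) (map (\<lambda>i. \<beta> {ps ! i, ps ! Suc i}) [0..<length ps - 1]) id = beta_along \<beta> ps"
proof (induction \<beta> ps rule: beta_along.induct)
  case (1 \<beta> a b ps)
  then show ?case
    by (simp add: upt_conv_Cons map_Suc_upt[symmetric] comp_def del: upt_Suc)
qed simp_all

lemma beta_along_append:
  "xs \<noteq> [] \<Longrightarrow> beta_along \<beta> (xs @ ys) = beta_along \<beta> xs \<circ> beta_along \<beta> (last xs # ys)"
  by (induction \<beta> xs rule: beta_along.induct) (simp_all add: comp_assoc)

context
  fixes V :: "'a set" and E :: "'a \<Rightarrow> 'a \<Rightarrow> bool" and N :: "'a set" and r :: 'a
    and lc rc :: "'a \<Rightarrow> 'a option" and Q :: "'q set" and \<alpha> :: "'a \<Rightarrow> 'q"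
    and \<beta> :: "'a set \<Rightarrow> 'q \<Rightarrow> 'q" and R :: "'a \<Rightarrow> ('q \<times> 'q) set"
  assumes nlc: "nlc_decomposition V E N r lc rc Q \<alpha> \<beta> R"
begin

lemma nlc_tree: "rooted_binary_tree N r lc rc"
  using nlc by (simp add: nlc_decomposition_def)

lemma nlc_vertex_leaf:
  assumes "x \<in> V"
  shows "x \<in> N" "lc x = None" "rc x = None"
proof -
  have "leaves N lc rc = V"
    using nlc by (simp add: nlc_decomposition_def)
  with assms show "x \<in> N" "lc x = None" "rc x = None"
    unfolding leaves_def by auto
qed

lemma nlc_label_in_labels: "x \<in> V \<Longrightarrow> \<alpha> x \<in> Q"
  using nlc by (simp add: nlc_decomposition_def image_subset_iff)

lemma nlc_betap_in_labels:
  assumes "u \<in> N" "v \<in> N" "q \<in> Q"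
  shows "betap \<beta> u v q \<in> Q"
  using nlc assms by (simp add: nlc_decomposition_def betap_def image_subset_iff)

lemma nlc_beta_eq_beta_along:
  assumes "u \<noteq> v" "down_path lc rc ps u v" "q \<in> Q"
  shows "\<beta> {u, v} q = beta_along \<beta> ps q"
  using nlc assms unfolding nlc_decomposition_def foldr_comp_beta_pairs_eq_beta_along
  by (elim conjE) (simp only: simp_thms)

lemma nlc_betap_trans:
  assumes uv: "ancestor lc rc u v" and vw: "ancestor lc rc v w" and "q \<in> Q"
  shows "betap \<beta> u w q = betap \<beta> u v (betap \<beta> v w q)"
proof (cases "u = v \<or> v = w")
  case True
  then show ?thesis by (auto simp: betap_def)
next
  case False
  then have "u \<noteq> v" "v \<noteq> w" by simp_all
  have "u \<noteq> w"
  proof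
    assume "u = w"
    with rooted_binary_tree_ancestor_antisym[OF nlc_tree uv] vw \<open>u \<noteq> v\<close> show False
      by simp
  qed
  have "v \<in> N" "w \<in> N"
    using rooted_binary_tree_proper_ancestor_in_nodes[OF nlc_tree] uv vw \<open>u \<noteq> v\<close> \<open>v \<noteq> w\<close>
    by blast+
  obtain xs where xs: "down_path lc rc xs u v"
    using uv by (rule ancestor_obtains_down_path)
  obtain ys where ys: "down_path lc rc ys v w"
    using vw by (rule ancestor_obtains_down_path)
  then obtain ys' where ys': "ys = v # ys'"
    unfolding down_path_def by (cases ys) auto
  have "down_path lc rc (xs @ ys') u w"
    using down_path_append[OF xs] ys unfolding ys' .
  then have "\<beta> {u, w} q = beta_along \<beta> (xs @ ys') q"
    by (rule nlc_beta_eq_beta_along[OF \<open>u \<noteq> w\<close> _ \<open>q \<in> Q\<close>])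
  also have "\<dots> = beta_along \<beta> xs (beta_along \<beta> ys q)"
    using xs beta_along_append[of xs \<beta> ys'] unfolding ys' down_path_def by simp
  also have "beta_along \<beta> ys q = \<beta> {v, w} q"
    using nlc_beta_eq_beta_along[OF \<open>v \<noteq> w\<close> ys \<open>q \<in> Q\<close>] by simp
  also have "beta_along \<beta> xs (\<beta> {v, w} q) = \<beta> {u, v} (\<beta> {v, w} q)"
    using nlc_beta_eq_beta_along[OF \<open>u \<noteq> v\<close> xs] \<open>v \<noteq> w\<close>
      nlc_betap_in_labels[OF \<open>v \<in> N\<close> \<open>w \<in> N\<close> \<open>q \<in> Q\<close>]
    by (simp add: betap_def)
  finally show ?thesis
    using \<open>u \<noteq> v\<close> \<open>v \<noteq> w\<close> \<open>u \<noteq> w\<close> by (simp add: betap_def)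
qed

lemma nlc_adjacency:
  assumes "w \<in> N" "lc w = Some a" "rc w = Some b"
    and "x \<in> V" "d \<in> V" "ancestor lc rc a x" "ancestor lc rc b d"
  shows "E x d \<longleftrightarrow> (betap \<beta> w x (\<alpha> x), betap \<beta> w d (\<alpha> d)) \<in> R w"
  using nlc assms unfolding nlc_decomposition_def by (elim conjE) blast

lemma nlc_twins_at_branch:
  assumes "graph V E"
    and children: "(lc w = Some a \<and> rc w = Some b) \<or> (lc w = Some b \<and> rc w = Some a)"
    and "x \<in> V" "z \<in> V" "d \<in> V"
    and "ancestor lc rc a x" "ancestor lc rc a z" "ancestor lc rc b d"
    and same_label: "betap \<beta> w x (\<alpha> x) = betap \<beta> w z (\<alpha> z)"
  shows "E x d \<longleftrightarrow> E z d"
proof -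
  from children have "child lc rc w a"
    unfolding child_def by blast
  then have "w \<in> N"
    by (rule rooted_binary_tree_child_in_nodes(1)[OF nlc_tree])
  from children show ?thesis
  proof
    assume "lc w = Some a \<and> rc w = Some b"
    then have "E s d \<longleftrightarrow> (betap \<beta> w s (\<alpha> s), betap \<beta> w d (\<alpha> d)) \<in> R w"
      if "s \<in> V" "ancestor lc rc a s" for s
      using nlc_adjacency[OF \<open>w \<in> N\<close>] that \<open>d \<in> V\<close> \<open>ancestor lc rc b d\<close> by blast
    with assms(3,4,6,7) same_label show ?thesis
      by metis
  next
    assume "lc w = Some b \<and> rc w = Some a"
    then have "E d s \<longleftrightarrow> (betap \<beta> w d (\<alpha> d), betap \<beta> w s (\<alpha> s)) \<in> R w"
      if "s \<in> V" "ancestor lc rc a s" for s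
      using nlc_adjacency[OF \<open>w \<in> N\<close>] that \<open>d \<in> V\<close> \<open>ancestor lc rc b d\<close> by blast
    moreover have "E s t \<longleftrightarrow> E t s" for s t
      using \<open>graph V E\<close> unfolding graph_def by blast
    ultimately show ?thesis
      using assms(3,4,6,7) same_label by metis
  qed
qed

lemma nlc_twins_below:
  assumes "graph V E" "y \<in> N"
    and "x \<in> V" "z \<in> V" "d \<in> V"
    and yx: "ancestor lc rc y x" and yz: "ancestor lc rc y z" and "\<not> ancestor lc rc y d"
    and same_label: "betap \<beta> y x (\<alpha> x) = betap \<beta> y z (\<alpha> z)"
  shows "E x d \<longleftrightarrow> E z d"
proof -
  have "ancestor lc rc r y" "ancestor lc rc r d"
    using nlc_tree \<open>y \<in> N\<close> nlc_vertex_leaf(1)[OF \<open>d \<in> V\<close>] unfolding rooted_binary_tree_def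
    by blast+
  then obtain w a b where ay: "ancestor lc rc a y" and bd: "ancestor lc rc b d"
    and children: "(lc w = Some a \<and> rc w = Some b) \<or> (lc w = Some b \<and> rc w = Some a)"
    using \<open>\<not> ancestor lc rc y d\<close> nlc_vertex_leaf(2,3)[OF \<open>d \<in> V\<close>] by (rule branching_ancestor)
  from children have "child lc rc w a"
    unfolding child_def by blast
  with ay have wy: "ancestor lc rc w y"
    by (meson ancestor_if_child ancestor_trans)
  have label_via_y: "betap \<beta> w s (\<alpha> s) = betap \<beta> w y (betap \<beta> y s (\<alpha> s))"
    if "s \<in> V" "ancestor lc rc y s" for s
    using nlc_betap_trans[OF wy that(2) nlc_label_in_labels[OF that(1)]] .
  have same_label_at_w: "betap \<beta> w x (\<alpha> x) = betap \<beta> w z (\<alpha> z)"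
    using label_via_y[OF \<open>x \<in> V\<close> yx] label_via_y[OF \<open>z \<in> V\<close> yz] same_label by simp
  have ax: "ancestor lc rc a x" and az: "ancestor lc rc a z"
    using ay yx yz by (blast intro: ancestor_trans)+
  show ?thesis
    by (rule nlc_twins_at_branch[OF \<open>graph V E\<close> children \<open>x \<in> V\<close> \<open>z \<in> V\<close> \<open>d \<in> V\<close>
          ax az bd same_label_at_w])
qed

end

theorem lemma6p4:
  fixes t :: int and V :: "'a set" and E :: "'a \<Rightarrow> 'a \<Rightarrow> bool"
    and N :: "'a set" and r :: 'a and lc rc :: "'a \<Rightarrow> 'a option"
    and Q :: "'q set" and \<alpha> :: "'a \<Rightarrow> 'q" and \<beta> :: "'a set \<Rightarrow> 'q \<Rightarrow> 'q"
    and R :: "'a \<Rightarrow> ('q \<times> 'q) set" and y p :: 'a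
  assumes "graph V E"
    and "nlc_decomposition V E N r lc rc Q \<alpha> \<beta> R"
    and "int (card Q) \<le> t"
    and "y \<in> N" and "y \<noteq> r" and "child lc rc p y"
  shows "twin_partition E (tree_component N lc rc p y \<inter> V) (tree_component N lc rc y p \<inter> V) Q
           (\<lambda>q. {u \<in> tree_component N lc rc y p \<inter> V. betap \<beta> y u (\<alpha> u) = q})"
proof -
  note nlc = assms(2)
  let ?C = "tree_component N lc rc y p \<inter> V" and ?D = "tree_component N lc rc p y \<inter> V"
  have C_below_y: "ancestor lc rc y x" if "x \<in> ?C" for x
    using tree_component_child_descendant[OF nlc_tree[OF nlc] assms(6)] that by blast
  have D_not_below_y: "\<not> ancestor lc rc y d" if "d \<in> ?D" for d
    using tree_component_parent_not_descendant[OF nlc_tree[OF nlc] assms(6)] that by blast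
  have labels: "betap \<beta> y x (\<alpha> x) \<in> Q" if "x \<in> ?C" for x
    using that nlc_betap_in_labels[OF nlc assms(4) nlc_vertex_leaf(1)[OF nlc]]
      nlc_label_in_labels[OF nlc] by blast
  have twins: "E x d \<longleftrightarrow> E z d"
    if "x \<in> ?C" "z \<in> ?C" "d \<in> ?D" "betap \<beta> y x (\<alpha> x) = betap \<beta> y z (\<alpha> z)" for x z d
    using that by (intro nlc_twins_below[OF nlc assms(1,4)] C_below_y D_not_below_y) simp_all
  show ?thesis
    unfolding twin_partition_def
  proof (intro conjI ballI impI)
    show "(\<Union>q\<in>Q. {x \<in> ?C. betap \<beta> y x (\<alpha> x) = q}) = ?C"
      using labels by blast
  next
    fix x z d q
    assume "x \<in> {x \<in> ?C. betap \<beta> y x (\<alpha> x) = q}"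
      and "z \<in> {z \<in> ?C. betap \<beta> y z (\<alpha> z) = q}" and "d \<in> ?D"
    then show "E x d \<longleftrightarrow> E z d"
      by (intro twins) simp_all
  qed blast
qed

end
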